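(* Let $\varepsilon$ be a formal parameter with $\varepsilon^2=0$, and consider the initial triple $(1+\varepsilon,\,1+\varepsilon,\,1+\varepsilon)$ of solutions of the Shadow Markoff equation $A^2+B^2+C^2=(3-3\varepsilon)ABC$. Then the shadow part of the tree of solutions obtained from this triple by mutations (along the Markoff tree) coincides with the classical Markoff tree: every triple $(a+\alpha\varepsilon,b+\beta\varepsilon,c+\gamma\varepsilon)$ in this tree satisfies $\alpha=a$, $\beta=b$, $\gamma=c$.
   Context: Dual numbers are elements $a+\alpha\varepsilon$ ($a,\alpha\in\mathbb{R}$) with $\varepsilon^2=0$; $\alpha$ is called the shadow (nilpotent) part. The mutation at $A$ sends $(A,B,C)=(a+\alpha\varepsilon,b+\beta\varepsilon,c+\gamma\varepsilon)$ to $(A',B,C)$ with $A'=(B^2+C^2)/A$, i.e., $a'=(b^2+c^2)/a$ and $\alpha'=(-a'\alpha+2b\beta+2c\gamma)/a$; mutations at $B$ and $C$ are defined symmetrically. The classical Markoff tree is the tree of positive integer solutions of $a^2+b^2+c^2=3abc$ obtained from $(1,1,1)$ by the mutations $a\mapsto (b^2+c^2)/a$ (and symmetric ones). *)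

theory Defs
  imports Main Complex_Main
begin

text \<open>Dual numbers a + alpha eps (eps^2 = 0): real part and shadow (nilpotent) part.\<close>
datatype dual = Dual (re: real) (sh: real)

type_synonym dtriple = "dual \<times> dual \<times> dual"

text \<open>Mutation of the first entry of a triple (A,B,C) to A' = (B^2+C^2)/A,
  i.e. a' = (b^2+c^2)/a and alpha' = (- a' alpha + 2 b beta + 2 c gamma)/a.\<close>
definition mut_dual :: "dual \<Rightarrow> dual \<Rightarrow> dual \<Rightarrow> dual" where
  "mut_dual A B C =
     (let a' = ((re B)^2 + (re C)^2) / re A
      in Dual a' ((- a' * sh A + 2 * re B * sh B + 2 * re C * sh C) / re A))"

definition mutA :: "dtriple \<Rightarrow> dtriple" where
  "mutA t = (case t of (A, B, C) \<Rightarrow> (mut_dual A B C, B, C))"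

definition mutB :: "dtriple \<Rightarrow> dtriple" where
  "mutB t = (case t of (A, B, C) \<Rightarrow> (A, mut_dual B A C, C))"

definition mutC :: "dtriple \<Rightarrow> dtriple" where
  "mutC t = (case t of (A, B, C) \<Rightarrow> (A, B, mut_dual C A B))"

inductive_set shadow_tree :: "dtriple set" where
  init: "(Dual 1 1, Dual 1 1, Dual 1 1) \<in> shadow_tree"
| stepA: "t \<in> shadow_tree \<Longrightarrow> mutA t \<in> shadow_tree"
| stepB: "t \<in> shadow_tree \<Longrightarrow> mutB t \<in> shadow_tree"
| stepC: "t \<in> shadow_tree \<Longrightarrow> mutC t \<in> shadow_tree"

end

theory Submission
  imports Defs
begin

text \<open>Every triple of the tree has the form \<open>(a(1+\<epsilon>), b(1+\<epsilon>), c(1+\<epsilon>))\<close>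
  with \<open>a, b, c > 0\<close> (positivity keeps every division by \<open>a\<close> meaningful), and
  mutation preserves this shape: since \<open>(1+\<epsilon>)\<^sup>2/(1+\<epsilon>) = 1+\<epsilon>\<close>, we get
  \<open>(B\<^sup>2+C\<^sup>2)/A = ((b\<^sup>2+c\<^sup>2)/a)(1+\<epsilon>)\<close>.\<close>

definition pos_multiple_of_1eps :: "dual \<Rightarrow> bool" where
  "pos_multiple_of_1eps d \<longleftrightarrow> 0 < re d \<and> sh d = re d"

lemma re_mut_dual_pos:
  assumes "0 < re A" "re B \<noteq> 0"
  shows "0 < re (mut_dual A B C)"
  using assms by (simp add: mut_dual_def add_pos_nonneg)

lemma sh_mut_dual_eq_re:
  assumes "re A \<noteq> 0" "sh A = re A" "sh B = re B" "sh C = re C"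
  shows "sh (mut_dual A B C) = re (mut_dual A B C)"
proof -
  define a' where "a' = ((re B)\<^sup>2 + (re C)\<^sup>2) / re A"
  have "a' * re A = (re B)\<^sup>2 + (re C)\<^sup>2"
    using assms(1) by (simp add: a'_def)
  then have "(- a' * sh A + 2 * re B * sh B + 2 * re C * sh C) / re A = a'"
    using assms by (simp add: field_simps power2_eq_square)
  then show ?thesis
    by (simp add: mut_dual_def Let_def a'_def)
qed

lemma pos_multiple_of_1eps_mut_dual:
  assumes "pos_multiple_of_1eps A" "pos_multiple_of_1eps B" "pos_multiple_of_1eps C"
  shows "pos_multiple_of_1eps (mut_dual A B C)"
  using assms re_mut_dual_pos sh_mut_dual_eq_re
  unfolding pos_multiple_of_1eps_def by (metis less_irrefl)

lemma shadow_tree_pos_multiple_of_1eps: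
  assumes "t \<in> shadow_tree"
  shows "case t of (A, B, C) \<Rightarrow>
           pos_multiple_of_1eps A \<and> pos_multiple_of_1eps B \<and> pos_multiple_of_1eps C"
  using assms
proof induction
  case init
  show ?case by (simp add: pos_multiple_of_1eps_def)
next
  case (stepA t)
  then show ?case by (auto simp: mutA_def intro: pos_multiple_of_1eps_mut_dual)
next
  case (stepB t)
  then show ?case by (auto simp: mutB_def intro: pos_multiple_of_1eps_mut_dual)
next
  case (stepC t)
  then show ?case by (auto simp: mutC_def intro: pos_multiple_of_1eps_mut_dual)
qed

theorem lemma4:
  assumes "(A, B, C) \<in> shadow_tree"
  shows "sh A = re A \<and> sh B = re B \<and> sh C = re C"
  using shadow_tree_pos_multiple_of_1eps[OF assms]
  by (simp add: pos_multiple_of_1eps_def)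

end
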